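(* Assume (A2) and (A3), and work in the dynamic Lanczos setting. Then for every $j=1,\dots,m$, $$A_1Q_j=Q_jT_j+\beta_{j+1}q_{j+1}e_j^\top+\delta Q'_j,$$ where $\delta Q'_j=[\delta q'_1,\dots,\delta q'_j]$ satisfies $\|\delta q'_i\|\le L_{gyy}\tilde\varepsilon_j$ for $i=1,\dots,j$.
   Context: Let $f,g:\mathbb{R}^{d_x}\times\mathbb{R}^{d_y}\to\mathbb{R}$ be twice continuously differentiable; norms are Euclidean/spectral and $\|(x,y)\|:=(\|x\|^2+\|y\|^2)^{1/2}$. (A2): $\nabla_xg,\nabla_yg$ are $L_{gx}$-, $L_{gy}$-Lipschitz and $\nabla^2_{xy}g,\nabla^2_{yy}g$ are $L_{gxy}$-, $L_{gyy}$-Lipschitz. (A3): $g(x,\cdot)$ is $\mu_g$-strongly convex for every $x$, $\mu_g>0$. Dynamic Lanczos setting: fix $x_1,\dots,x_m\in\mathbb{R}^{d_x}$, $y_1,\dots,y_m\in\mathbb{R}^{d_y}$, $A_i:=\nabla^2_{yy}g(x_i,y_i)$, $\bar b\ne0$. Set $q_0=0$, $\beta_1=0$, $q_1=\bar b/\|\bar b\|$, and $u_i=A_iq_i-\beta_iq_{i-1}$, $\alpha_i=q_i^\top u_i$, $\omega_i=u_i-\alpha_iq_i$, $\beta_{i+1}=\|\omega_i\|$, $q_{i+1}=\omega_i/\beta_{i+1}$ (assume $\beta_{i+1}\ne0$). $Q_j:=[q_1,\dots,q_j]$; $T_j$ is the $j\times j$ symmetric tridiagonal matrix with diagonal $\alpha_1,\dots,\alpha_j$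 and off-diagonal $\beta_2,\dots,\beta_j$; $e_j$ is the $j$-th standard basis vector. $\tilde\varepsilon_j:=\max_{1\le s,t\le j}\big(\|x_s-x_t\|+\|y_s-y_t\|\big)$. *)

theory Defs
  imports "HOL-Analysis.Analysis"
begin

definition spec_norm :: "real^'n^'m \<Rightarrow> real" where
  "spec_norm A = onorm (\<lambda>v. A *v v)"

definition strongly_convex :: "real \<Rightarrow> ('a::real_normed_vector \<Rightarrow> real) \<Rightarrow> bool" where
  "strongly_convex mu f \<longleftrightarrow>
     (\<forall>u v t. 0 \<le> t \<and> t \<le> 1 \<longrightarrow>
        f (t *\<^sub>R u + (1 - t) *\<^sub>R v)
          \<le> t * f u + (1 - t) * f v - mu / 2 * t * (1 - t) * (norm (u - v))\<^sup>2)"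

text \<open>Lanczos recursion driven by the matrix sequence A_1, A_2, ... and start vector b.
  lanczos_state A b i = (q_(i-1), q_i, beta_i) for i >= 1.\<close>
fun lanczos_state :: "(nat \<Rightarrow> real^'m^'m) \<Rightarrow> real^'m \<Rightarrow> nat \<Rightarrow> (real^'m) \<times> (real^'m) \<times> real" where
  "lanczos_state A b 0 = (0, 0, 0)"
| "lanczos_state A b (Suc 0) = (0, (1 / norm b) *\<^sub>R b, 0)"
| "lanczos_state A b (Suc (Suc i)) =
     (let (qp, q, be) = lanczos_state A b (Suc i);
          u = A (Suc i) *v q - be *\<^sub>R qp;
          al = q \<bullet> u;
          w = u - al *\<^sub>R q;
          be' = norm w
      in (q, (1 / be') *\<^sub>R w, be'))"

definition lq :: "(nat \<Rightarrow> real^'m^'m) \<Rightarrow> real^'m \<Rightarrow> nat \<Rightarrow> real^'m" where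
  "lq A b i = fst (snd (lanczos_state A b i))"

definition lbeta :: "(nat \<Rightarrow> real^'m^'m) \<Rightarrow> real^'m \<Rightarrow> nat \<Rightarrow> real" where
  "lbeta A b i = snd (snd (lanczos_state A b i))"

definition lu :: "(nat \<Rightarrow> real^'m^'m) \<Rightarrow> real^'m \<Rightarrow> nat \<Rightarrow> real^'m" where
  "lu A b i = A i *v lq A b i - lbeta A b i *\<^sub>R lq A b (i - 1)"

definition lalpha :: "(nat \<Rightarrow> real^'m^'m) \<Rightarrow> real^'m \<Rightarrow> nat \<Rightarrow> real" where
  "lalpha A b i = lq A b i \<bullet> lu A b i"

text \<open>Entry (k,i) (1-based) of the j x j symmetric tridiagonal matrix T_j with diagonal
  alpha_1..alpha_j and off-diagonal beta_2..beta_j.\<close>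
definition lT :: "(nat \<Rightarrow> real^'m^'m) \<Rightarrow> real^'m \<Rightarrow> nat \<Rightarrow> nat \<Rightarrow> nat \<Rightarrow> real" where
  "lT A b j k i =
     (if k \<in> {1..j} \<and> i \<in> {1..j} then
        (if k = i then lalpha A b i
         else if k = i + 1 then lbeta A b k
         else if i = k + 1 then lbeta A b i
         else 0)
      else 0)"

text \<open>Column i of the d_y x j matrix product Q_j T_j, where Q_j = [q_1,...,q_j].\<close>
definition QT_col :: "(nat \<Rightarrow> real^'m^'m) \<Rightarrow> real^'m \<Rightarrow> nat \<Rightarrow> nat \<Rightarrow> real^'m" where
  "QT_col A b j i = (\<Sum>k = 1..j. lT A b j k i *\<^sub>R lq A b k)"

definition eps_tilde :: "(nat \<Rightarrow> 'a::real_normed_vector) \<Rightarrow> (nat \<Rightarrow> 'b::real_normed_vector) \<Rightarrow> nat \<Rightarrow> real" where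
  "eps_tilde xs ys j = Max ((\<lambda>(s, t). norm (xs s - xs t) + norm (ys s - ys t)) ` ({1..j} \<times> {1..j}))"

end

theory Submission
  imports Defs
begin

text \<open>Each column of the dynamic Lanczos process satisfies the exact three-term relation
  with its own matrix, A_i q_i = beta_i q_(i-1) + alpha_i q_i + beta_(i+1) q_(i+1), which is
  column i of Q_j T_j + beta_(j+1) q_(j+1) e_j^T. Replacing A_i by A_1 therefore costs
  dq'_i = (A_1 - A_i) q_i, whose norm is at most ||A_1 - A_i|| because ||q_i|| <= 1, and
  ||A_1 - A_i|| <= L_gyy eps_j by the Lipschitz continuity of the Hessian block g_yy.\<close>

lemma lanczos_state_Suc:
  "lanczos_state A b (Suc i) = (lq A b i, lq A b (Suc i), lbeta A b (Suc i))"
proof -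
  have "fst (lanczos_state A b (Suc i)) = lq A b i"
    by (cases i) (auto simp: lq_def Let_def split: prod.splits)
  then show ?thesis by (simp add: lq_def lbeta_def prod_eq_iff)
qed

lemma lanczos_three_term:
  assumes "k \<ge> 1"
  shows "lbeta A b (Suc k) *\<^sub>R lq A b (Suc k)
           = A k *v lq A b k - lbeta A b k *\<^sub>R lq A b (k - 1) - lalpha A b k *\<^sub>R lq A b k"
proof -
  obtain i where k: "k = Suc i" using assms by (cases k) auto
  define w where
    "w = A k *v lq A b k - lbeta A b k *\<^sub>R lq A b (k - 1) - lalpha A b k *\<^sub>R lq A b k"
  have "lanczos_state A b (Suc k) = (lq A b k, (1 / norm w) *\<^sub>R w, norm w)"
    unfolding k w_def using lanczos_state_Suc[of A b i]
    by (simp add: Let_def lalpha_def lu_def)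
  then have "lq A b (Suc k) = (1 / norm w) *\<^sub>R w" "lbeta A b (Suc k) = norm w"
    by (simp_all add: lq_def lbeta_def)
  then show ?thesis unfolding w_def[symmetric] by (cases "w = 0") auto
qed

text \<open>No nondegeneracy is needed: on breakdown (b = 0 or \<beta> = 0) HOL's 1 / 0 = 0 makes the
  Lanczos vector zero.\<close>
lemma norm_lq_le_1: "norm (lq A b i) \<le> 1"
proof (cases i)
  case 0
  then show ?thesis by (simp add: lq_def)
next
  case (Suc n)
  show ?thesis
  proof (cases n)
    case 0
    then show ?thesis using Suc by (cases "b = 0") (auto simp: lq_def)
  next
    case (Suc n')
    define w where "w = lu A b (Suc n') - lalpha A b (Suc n') *\<^sub>R lq A b (Suc n')"
    have "lq A b i = (1 / norm w) *\<^sub>R w"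
      using \<open>i = Suc n\<close> Suc lanczos_state_Suc[of A b n']
      by (auto simp: w_def lq_def Let_def lalpha_def lu_def split: prod.splits)
    then show ?thesis by (cases "w = 0") auto
  qed
qed

lemma QT_col_eq:
  assumes i: "i \<in> {1..j}"
  shows "QT_col A b j i = lbeta A b i *\<^sub>R lq A b (i - 1) + lalpha A b i *\<^sub>R lq A b i
     + (if i < j then lbeta A b (Suc i) *\<^sub>R lq A b (Suc i) else 0)"
proof -
  have term_eq: "lT A b j k i *\<^sub>R lq A b k =
      (if k = i - 1 then lbeta A b i *\<^sub>R lq A b (i - 1) else 0)
    + (if k = i then lalpha A b i *\<^sub>R lq A b i else 0)
    + (if k = i + 1 then lbeta A b (Suc i) *\<^sub>R lq A b (Suc i) else 0)"
    if "k \<in> {1..j}" for k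
    using i that by (auto simp: lT_def)
  have "QT_col A b j i = (\<Sum>k = 1..j.
      (if k = i - 1 then lbeta A b i *\<^sub>R lq A b (i - 1) else 0)
    + (if k = i then lalpha A b i *\<^sub>R lq A b i else 0)
    + (if k = i + 1 then lbeta A b (Suc i) *\<^sub>R lq A b (Suc i) else 0))"
    unfolding QT_col_def by (rule sum.cong) (simp_all add: term_eq)
  also have "\<dots> = (if 2 \<le> i then lbeta A b i *\<^sub>R lq A b (i - 1) else 0)
     + lalpha A b i *\<^sub>R lq A b i
     + (if i < j then lbeta A b (Suc i) *\<^sub>R lq A b (Suc i) else 0)"
    using i by (simp add: sum.distrib; linarith)
  also have "\<dots> = lbeta A b i *\<^sub>R lq A b (i - 1) + lalpha A b i *\<^sub>R lq A b i
     + (if i < j then lbeta A b (Suc i) *\<^sub>R lq A b (Suc i) else 0)"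
    using i by (cases "i = 1") (auto simp: lq_def)
  finally show ?thesis .
qed

lemma lanczos_relation_column:
  assumes "i \<in> {1..j}"
  shows "A i *v lq A b i
           = QT_col A b j i + (if i = j then lbeta A b (Suc j) *\<^sub>R lq A b (Suc j) else 0)"
  using assms lanczos_three_term[of i A b] by (cases "i = j") (auto simp: QT_col_eq)

lemma norm_matrix_vector_le_spec_norm: "norm (M *v v) \<le> spec_norm M * norm v"
  unfolding spec_norm_def by (rule onorm) simp

lemma spec_norm_nonneg: "0 \<le> spec_norm M"
  unfolding spec_norm_def by (rule onorm_pos_le) simp

lemma lipschitz_spec_norm_const_nonneg:
  fixes H :: "'a::real_normed_vector \<Rightarrow> 'b::real_normed_vector \<Rightarrow> real^'k^'l"
    and x x' :: 'a and y y' :: 'b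
  assumes "\<And>x y x' y'. spec_norm (H x y - H x' y') \<le> L * norm ((x, y) - (x', y'))"
    and "(x, y) \<noteq> (x', y')"
  shows "0 \<le> L"
proof -
  have "0 \<le> L * norm ((x, y) - (x', y'))"
    using spec_norm_nonneg assms(1) order_trans by blast
  moreover have "norm ((x, y) - (x', y')) > 0" using assms(2) by (simp add: zero_prod_def)
  ultimately show ?thesis by (simp add: zero_le_mult_iff)
qed

lemma eps_tilde_ge:
  assumes "s \<in> {1..j}" "t \<in> {1..j}"
  shows "norm (xs s - xs t) + norm (ys s - ys t) \<le> eps_tilde xs ys j"
  unfolding eps_tilde_def using assms by (intro Max_ge) (auto intro!: image_eqI[of _ _ "(s, t)"])

lemma lipschitz_spec_norm_le_eps_tilde:
  fixes H :: "'a::real_normed_vector \<Rightarrow> 'b::real_normed_vector \<Rightarrow> real^'k^'l"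
  assumes lip: "\<And>x y x' y'. spec_norm (H x y - H x' y') \<le> L * norm ((x, y) - (x', y'))"
    and "L \<ge> 0" "s \<in> {1..j}" "t \<in> {1..j}"
  shows "spec_norm (H (xs s) (ys s) - H (xs t) (ys t)) \<le> L * eps_tilde xs ys j"
proof -
  have "spec_norm (H (xs s) (ys s) - H (xs t) (ys t)) \<le> L * norm ((xs s, ys s) - (xs t, ys t))"
    by (rule lip)
  also have "\<dots> \<le> L * (norm (xs s - xs t) + norm (ys s - ys t))"
    using \<open>L \<ge> 0\<close> norm_Pair_le[of "xs s - xs t" "ys s - ys t"] by (intro mult_left_mono) auto
  also have "\<dots> \<le> L * eps_tilde xs ys j"
    using assms(2-) by (intro mult_left_mono eps_tilde_ge)
  finally show ?thesis .
qed

theorem lemmaG1: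
  fixes g :: "real^'n \<Rightarrow> real^'m \<Rightarrow> real"
    and gx :: "real^'n \<Rightarrow> real^'m \<Rightarrow> real^'n"
    and gy :: "real^'n \<Rightarrow> real^'m \<Rightarrow> real^'m"
    and Hxx :: "real^'n \<Rightarrow> real^'m \<Rightarrow> real^'n^'n"
    and Hxy :: "real^'n \<Rightarrow> real^'m \<Rightarrow> real^'m^'n"
    and Hyx :: "real^'n \<Rightarrow> real^'m \<Rightarrow> real^'n^'m"
    and Hyy :: "real^'n \<Rightarrow> real^'m \<Rightarrow> real^'m^'m"
    and Lgx Lgy Lgxy Lgyy mu_g :: real
    and m :: nat
    and xs :: "nat \<Rightarrow> real^'n"
    and ys :: "nat \<Rightarrow> real^'m"
    and bbar :: "real^'m"
  assumes grad: "\<And>x y. ((\<lambda>p. g (fst p) (snd p)) has_derivative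
                     (\<lambda>(h, k). gx x y \<bullet> h + gy x y \<bullet> k)) (at (x, y))"
    and hess_x: "\<And>x y. ((\<lambda>p. gx (fst p) (snd p)) has_derivative
                     (\<lambda>(h, k). Hxx x y *v h + Hxy x y *v k)) (at (x, y))"
    and hess_y: "\<And>x y. ((\<lambda>p. gy (fst p) (snd p)) has_derivative
                     (\<lambda>(h, k). Hyx x y *v h + Hyy x y *v k)) (at (x, y))"
    and cont: "continuous_on UNIV (\<lambda>p. Hxx (fst p) (snd p))"
              "continuous_on UNIV (\<lambda>p. Hxy (fst p) (snd p))"
              "continuous_on UNIV (\<lambda>p. Hyx (fst p) (snd p))"
              "continuous_on UNIV (\<lambda>p. Hyy (fst p) (snd p))"
    and A2_gx: "\<And>x y x' y'. norm (gx x y - gx x' y') \<le> Lgx * norm ((x, y) - (x', y'))"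
    and A2_gy: "\<And>x y x' y'. norm (gy x y - gy x' y') \<le> Lgy * norm ((x, y) - (x', y'))"
    and A2_gxy: "\<And>x y x' y'. spec_norm (Hyx x y - Hyx x' y') \<le> Lgxy * norm ((x, y) - (x', y'))"
    and A2_gyy: "\<And>x y x' y'. spec_norm (Hyy x y - Hyy x' y') \<le> Lgyy * norm ((x, y) - (x', y'))"
    and A3: "mu_g > 0" "\<And>x. strongly_convex mu_g (g x)"
    and b_nz: "bbar \<noteq> 0"
    and beta_nz: "\<And>i. i \<in> {1..m} \<Longrightarrow> lbeta (\<lambda>i. Hyy (xs i) (ys i)) bbar (Suc i) \<noteq> 0"
  shows "\<forall>j \<in> {1..m}. \<exists>dq :: nat \<Rightarrow> real^'m.
           (\<forall>i \<in> {1..j}.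
              Hyy (xs 1) (ys 1) *v lq (\<lambda>i. Hyy (xs i) (ys i)) bbar i
                = QT_col (\<lambda>i. Hyy (xs i) (ys i)) bbar j i
                  + (if i = j then lbeta (\<lambda>i. Hyy (xs i) (ys i)) bbar (Suc j) *\<^sub>R
                                   lq (\<lambda>i. Hyy (xs i) (ys i)) bbar (Suc j) else 0)
                  + dq i)
         \<and> (\<forall>i \<in> {1..j}. norm (dq i) \<le> Lgyy * eps_tilde xs ys j)"
proof (intro ballI)
  fix j
  define A where "A = (\<lambda>i. Hyy (xs i) (ys i))"
  define dq where "dq i = (A 1 - A i) *v lq A bbar i" for i
  have Lgyy_nonneg: "0 \<le> Lgyy"
    using A2_gyy by (rule lipschitz_spec_norm_const_nonneg[of _ _ 0 0 0 "1 :: real^'m"]) simp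
  have "Hyy (xs 1) (ys 1) *v lq A bbar i = QT_col A bbar j i
          + (if i = j then lbeta A bbar (Suc j) *\<^sub>R lq A bbar (Suc j) else 0) + dq i"
    if "i \<in> {1..j}" for i
    using lanczos_relation_column[OF that, of A bbar] by (simp add: A_def dq_def algebra_simps)
  moreover have "norm (dq i) \<le> Lgyy * eps_tilde xs ys j" if i: "i \<in> {1..j}" for i
  proof -
    have "norm (dq i) \<le> spec_norm (A 1 - A i) * norm (lq A bbar i)"
      unfolding dq_def by (rule norm_matrix_vector_le_spec_norm)
    also have "\<dots> \<le> spec_norm (A 1 - A i)"
      by (intro mult_left_le norm_lq_le_1 spec_norm_nonneg)
    also have "\<dots> \<le> Lgyy * eps_tilde xs ys j"
      unfolding A_def using i by (intro lipschitz_spec_norm_le_eps_tilde[OF A2_gyy Lgyy_nonneg]) simp_all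
    finally show ?thesis .
  qed
  ultimately show "\<exists>dq. (\<forall>i \<in> {1..j}. Hyy (xs 1) (ys 1) *v lq A bbar i = QT_col A bbar j i
          + (if i = j then lbeta A bbar (Suc j) *\<^sub>R lq A bbar (Suc j) else 0) + dq i)
        \<and> (\<forall>i \<in> {1..j}. norm (dq i) \<le> Lgyy * eps_tilde xs ys j)"
    by blast
qed

end
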